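(* Let $\mu\in\mathcal{L}$. Then $F_\mu$ is injective on $\mathbb{C}^+$ if and only if $\eta_{W(\mu)}$ is injective on the open unit disc $\mathbb{D}$.
   Context: For a probability measure $\mu$ on $\mathbb{R}$, $G_\mu(z)=\int\frac{d\mu(x)}{z-x}$ and $F_\mu=1/G_\mu$ on the upper half-plane $\mathbb{C}^+$. $\mathcal{L}$ is the set of probability measures $\mu$ on $\mathbb{R}$ with $F_\mu(z+2\pi)=F_\mu(z)+2\pi$ for all $z\in\mathbb{C}^+$. For a probability measure $\nu$ on the unit circle, $\psi_\nu(z)=\int\frac{z\zeta}{1-z\zeta}d\nu(\zeta)$ and $\eta_\nu=\psi_\nu/(1+\psi_\nu)$ on $\mathbb{D}$. $W(\mu)$ is the push-forward of $\mu$ under $x\mapsto e^{-ix}$. *)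

theory Defs
  imports "HOL-Probability.Probability"
begin

definition real_prob_measure :: "real measure \<Rightarrow> bool" where
  "real_prob_measure \<mu> \<longleftrightarrow> prob_space \<mu> \<and> sets \<mu> = sets (borel :: real measure)"

definition circle_prob_measure :: "complex measure \<Rightarrow> bool" where
  "circle_prob_measure \<nu> \<longleftrightarrow> prob_space \<nu> \<and> sets \<nu> = sets (borel :: complex measure)
     \<and> emeasure \<nu> (sphere 0 1) = 1"

definition upper_half_plane :: "complex set" where
  "upper_half_plane = {z. Im z > 0}"

definition cauchy_G :: "real measure \<Rightarrow> complex \<Rightarrow> complex" where
  "cauchy_G \<mu> z = (LINT x|\<mu>. 1 / (z - complex_of_real x))"

definition cauchy_F :: "real measure \<Rightarrow> complex \<Rightarrow> complex" where
  "cauchy_F \<mu> z = 1 / cauchy_G \<mu> z"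

definition class_L :: "real measure set" where
  "class_L = {\<mu>. real_prob_measure \<mu> \<and>
     (\<forall>z\<in>upper_half_plane. cauchy_F \<mu> (z + 2 * of_real pi) = cauchy_F \<mu> z + 2 * of_real pi)}"

definition psi_circ :: "complex measure \<Rightarrow> complex \<Rightarrow> complex" where
  "psi_circ \<nu> z = (LINT \<zeta>|\<nu>. z * \<zeta> / (1 - z * \<zeta>))"

definition eta_circ :: "complex measure \<Rightarrow> complex \<Rightarrow> complex" where
  "eta_circ \<nu> z = psi_circ \<nu> z / (1 + psi_circ \<nu> z)"

definition wrap_W :: "real measure \<Rightarrow> complex measure" where
  "wrap_W \<mu> = distr \<mu> borel (\<lambda>x. exp (- \<i> * complex_of_real x))"

end

theory Submission
  imports Defs "HOL-Real_Asymp.Real_Asymp"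
begin

text \<open>
  Put \<open>k(w) = (1 + e^(iw)) / (1 - e^(iw)) = i cot(w/2)\<close>, so that
  \<open>\<psi>(e^(iz)) = (\<integral> k(z - x) d\<mu>(x) - 1) / 2\<close> for the wrapped measure. Expanding
  \<open>cot(w/2) = \<Sum>\<^sub>k 2/(w + 2\<pi>k)\<close> and integrating termwise, the periodicity of \<open>F\<close> turns
  \<open>\<integral> 1/(z + 2\<pi>k - x) d\<mu>(x) = G(z + 2\<pi>k)\<close> into \<open>1/(F(z) + 2\<pi>k)\<close>; hence
  \<open>\<integral> k(z - x) d\<mu>(x) = k(F(z))\<close> and \<open>\<eta>(e^(iz)) = e^(iF(z))\<close>. Since \<open>z \<mapsto> e^(iz)\<close> maps the
  upper half-plane onto the punctured disc with fibres \<open>z + 2\<pi>\<int>\<close>, and \<open>F\<close> commutes with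
  these translations, \<open>F\<close> is injective iff \<open>\<eta>\<close> is.
\<close>

lemma LIMSEQ_norm_diff_bound:
  fixes f :: "nat \<Rightarrow> 'a::real_normed_vector"
  assumes "B \<longlonglongrightarrow> 0" "\<And>n. norm (f n - l) \<le> B n"
  shows "f \<longlonglongrightarrow> l"
proof (rule LIM_zero_cancel)
  show "(\<lambda>n. f n - l) \<longlonglongrightarrow> 0"
    using always_eventually[of "\<lambda>n. norm (f n - l) \<le> B n"] assms by (blast intro: Lim_null_comparison)
qed

lemma sum_int_interval_telescope:
  fixes f :: "int \<Rightarrow> 'a::ab_group_add"
  assumes "m \<le> n"
  shows "(\<Sum>k\<in>{m..<n}. f (k + 1) - f k) = f n - f m"
  using assms
proof (induction n rule: int_ge_induct)
  case (step n)
  have "{m..<n + 1} = insert n {m..<n}" using step.hyps by auto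
  then show ?case using step.IH step.hyps by simp
qed simp

lemma sum_symmetric_int_interval:
  "(\<Sum>k\<in>{- int N..<int N}. f k) = (\<Sum>k<N. f (int k) + f (- int k - 1))"
proof (induction N)
  case (Suc N)
  have "{- int (Suc N)..<int (Suc N)} = insert (- int N - 1) (insert (int N) {- int N..<int N})"
    by auto
  then show ?case using Suc by (simp add: algebra_simps)
qed simp

section \<open>Partial fractions of the cotangent\<close>

lemma Digamma_reflection_complex:
  fixes z :: complex
  assumes "z \<notin> \<int>"
  shows "Digamma (1 - z) - Digamma z = of_real pi * cot (of_real pi * z)"
proof -
  define g where "g t = Gamma t * Gamma (1 - t) * sin (of_real pi * t)" for t :: complex
  have sin_nonzero: "sin (of_real pi * t) \<noteq> 0" if "t \<notin> \<int>" for t :: complex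
    using that by (auto simp: sin_eq_0)
  have g_const: "g t = of_real pi" if "t \<notin> \<int>" for t
    using Gamma_reflection_complex[of t] sin_nonzero[OF that] by (simp add: g_def field_simps)
  have z: "z \<notin> \<int>\<^sub>\<le>\<^sub>0" "1 - z \<notin> \<int>\<^sub>\<le>\<^sub>0"
    using assms nonpos_Ints_subset_Ints Ints_diff[of 1 "1 - z"] by auto
  have g_deriv: "(g has_field_derivative
      (Gamma z * Digamma z * Gamma (1 - z) * sin (of_real pi * z)
       + Gamma z * (Gamma (1 - z) * Digamma (1 - z) * (-1)) * sin (of_real pi * z)
       + Gamma z * Gamma (1 - z) * (cos (of_real pi * z) * of_real pi))) (at z)"
    unfolding g_def
    by (rule derivative_eq_intros has_field_derivative_Gamma
          DERIV_chain2[OF has_field_derivative_Gamma] | simp add: z)+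
      (simp add: algebra_simps)
  have g_deriv_zero: "(g has_field_derivative 0) (at z)"
  proof (rule has_field_derivative_transform_within_open[of "\<lambda>_. of_real pi" 0 z "- \<int>"])
    show "open (- (\<int>::complex set))" by (intro open_Compl closed_Ints)
  qed (use assms g_const in auto)
  from DERIV_unique[OF g_deriv g_deriv_zero] have "Gamma z * Gamma (1 - z) *
      ((Digamma z - Digamma (1 - z)) * sin (of_real pi * z) + cos (of_real pi * z) * of_real pi) = 0"
    by (simp add: algebra_simps)
  moreover have "Gamma z \<noteq> 0" "Gamma (1 - z) \<noteq> 0" using z by (simp_all add: Gamma_eq_zero_iff)
  ultimately have "(Digamma z - Digamma (1 - z)) * sin (of_real pi * z) + cos (of_real pi * z) * of_real pi = 0"
    by simp
  with sin_nonzero[OF assms] show ?thesis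
    by (simp add: cot_def field_simps)
qed

lemma cot_partial_fractions:
  fixes z :: complex
  assumes "z \<notin> \<int>"
  shows "(\<lambda>k. inverse (z + of_nat k) - inverse (1 - z + of_nat k)) sums (of_real pi * cot (of_real pi * z))"
proof -
  have "z \<noteq> 0" "1 - z \<noteq> 0" using assms by auto
  then have "(\<lambda>k. inverse (of_nat (Suc k)) - inverse (w + of_nat k)) sums (Digamma w + euler_mascheroni)"
    if "w \<in> {z, 1 - z}" for w
    using that summable_sums[OF summable_Digamma] by (auto simp: Digamma_def)
  from sums_diff[OF this[of "1 - z"] this[of z]] show ?thesis
    by (simp add: algebra_simps Digamma_reflection_complex[OF assms])
qed

definition schwarz_kernel :: "complex \<Rightarrow> complex" where
  "schwarz_kernel w = (1 + exp (\<i> * w)) / (1 - exp (\<i> * w))"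

definition cot_partial_sum :: "nat \<Rightarrow> complex \<Rightarrow> complex" where
  "cot_partial_sum N w = (\<Sum>k\<in>{- int N..<int N}. 1 / (w + 2 * of_real pi * of_int k))"

lemma cot_partial_sum_tendsto:
  assumes "w / (2 * of_real pi) \<notin> \<int>"
  shows "(\<lambda>N. cot_partial_sum N w) \<longlonglongrightarrow> cot (w / 2) / 2"
proof -
  define z where "z = w / (2 * of_real pi)"
  have w: "w = 2 * of_real pi * z" by (simp add: z_def)
  have "1 / (w + 2 * of_real pi * of_int (int k)) + 1 / (w + 2 * of_real pi * of_int (- int k - 1))
      = (inverse (z + of_nat k) - inverse (1 - z + of_nat k)) / (2 * of_real pi)" for k
  proof -
    have "w + 2 * of_real pi * of_int (int k) = 2 * of_real pi * (z + of_nat k)"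
      "w + 2 * of_real pi * of_int (- int k - 1) = - (2 * of_real pi) * (1 - z + of_nat k)"
      by (simp_all add: w algebra_simps)
    then show ?thesis by (simp add: inverse_eq_divide diff_divide_distrib mult.commute)
  qed
  then have "cot_partial_sum N w
      = (\<Sum>k<N. inverse (z + of_nat k) - inverse (1 - z + of_nat k)) / (2 * of_real pi)" for N
    by (simp add: cot_partial_sum_def sum_symmetric_int_interval sum_divide_distrib)
  moreover have "(\<lambda>N. (\<Sum>k<N. inverse (z + of_nat k) - inverse (1 - z + of_nat k)) / (2 * of_real pi))
      \<longlonglongrightarrow> of_real pi * cot (of_real pi * z) / (2 * of_real pi)"
    using cot_partial_fractions[OF assms[folded z_def]] by (intro tendsto_divide) (auto simp: sums_def)
  ultimately show ?thesis by (simp add: w)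
qed

lemma cot_half_eq_schwarz_kernel:
  assumes "sin (w / 2) \<noteq> 0"
  shows "cot (w / 2) = - \<i> * schwarz_kernel w"
proof -
  define e where "e = exp (\<i> * (w / 2))"
  have "e \<noteq> 0" by (simp add: e_def)
  have exp_w: "exp (\<i> * w) = e * e" unfolding e_def by (simp flip: exp_add)
  have cos: "cos (w / 2) = (e + inverse e) / 2" and sin: "sin (w / 2) = (e - inverse e) / (2 * \<i>)"
    unfolding cos_exp_eq sin_exp_eq e_def by (simp_all add: exp_minus)
  have "e - inverse e \<noteq> 0" using assms sin by auto
  then have "1 - e * e \<noteq> 0" using \<open>e \<noteq> 0\<close> by (auto simp: field_simps)
  then show ?thesis
    unfolding cot_def schwarz_kernel_def cos sin exp_w using \<open>e \<noteq> 0\<close> \<open>e - inverse e \<noteq> 0\<close>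
    by (simp add: field_simps)
qed

lemma cot_partial_sum_tendsto_schwarz_kernel:
  assumes "Im w \<noteq> 0"
  shows "(\<lambda>N. cot_partial_sum N w) \<longlonglongrightarrow> - \<i> * schwarz_kernel w / 2"
proof -
  have "w / (2 * of_real pi) \<notin> \<int>"
  proof
    assume "w / (2 * of_real pi) \<in> \<int>"
    then obtain n :: int where "w / (2 * of_real pi) = of_int n" by (auto elim: Ints_cases)
    then have "w = 2 * of_real pi * of_int n" by (simp add: field_simps)
    then show False using assms by simp
  qed
  moreover have "sin (w / 2) \<noteq> 0"
    using assms by (auto simp: sin_eq_0)
  ultimately show ?thesis
    using cot_partial_sum_tendsto cot_half_eq_schwarz_kernel by fastforce
qed

lemma cot_partial_sum_diff_tendsto:
  assumes "Im u \<noteq> 0" "Im v \<noteq> 0"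
  shows "(\<lambda>N. cot_partial_sum N u - cot_partial_sum N v)
    \<longlonglongrightarrow> - \<i> / 2 * (schwarz_kernel u - schwarz_kernel v)"
proof -
  have "- \<i> / 2 * (schwarz_kernel u - schwarz_kernel v) = - \<i> * schwarz_kernel u / 2 - - \<i> * schwarz_kernel v / 2"
    by (simp add: field_simps)
  then show ?thesis
    using tendsto_diff[OF assms[THEN cot_partial_sum_tendsto_schwarz_kernel]] by simp
qed

section \<open>Uniform estimates in a half-plane\<close>

lemma norm_schwarz_kernel_minus_one_le:
  assumes "b > 0" "Im w \<ge> b"
  shows "norm (schwarz_kernel w - 1) \<le> 2 * exp (- b) / (1 - exp (- b))"
proof -
  define e where "e = exp (\<i> * w)"
  have e: "norm e \<le> exp (- b)"
    using assms by (simp add: e_def norm_exp_eq_Re)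
  have "1 - exp (- b) \<le> norm (1 - e)"
    using norm_triangle_ineq2[of 1 e] e by simp
  moreover have "0 < 1 - exp (- b)" using assms by simp
  ultimately have "1 - e \<noteq> 0" by auto
  then have "schwarz_kernel w - 1 = 2 * e / (1 - e)"
    by (simp add: schwarz_kernel_def e_def[symmetric] field_simps)
  also have "norm \<dots> \<le> 2 * exp (- b) / (1 - exp (- b))"
    unfolding norm_divide norm_mult using e \<open>1 - exp (- b) \<le> norm (1 - e)\<close> \<open>0 < 1 - exp (- b)\<close>
    by (intro frac_le) auto
  finally show ?thesis .
qed

lemma norm_inverse_le_Im:
  fixes w :: complex
  assumes "b > 0" "Im w \<ge> b"
  shows "norm (1 / w) \<le> 1 / b"
  using assms abs_Im_le_cmod[of w] by (simp add: norm_divide frac_le)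

lemma norm_inverse_sq_le:
  fixes w :: complex
  assumes "b > 0" "Im w \<ge> b"
  shows "(norm (1 / w))\<^sup>2 \<le> 1 / (b\<^sup>2 + (Re w)\<^sup>2)"
proof -
  have "b\<^sup>2 \<le> (Im w)\<^sup>2" using assms by (simp add: power_mono)
  then have "b\<^sup>2 + (Re w)\<^sup>2 \<le> (norm w)\<^sup>2" by (simp add: cmod_power2)
  moreover have "0 < b\<^sup>2 + (Re w)\<^sup>2" using assms by (simp add: add_pos_nonneg)
  ultimately show ?thesis by (simp add: norm_divide power_divide frac_le)
qed

lemma norm_inverse_diff_le:
  fixes u v :: complex
  assumes "u \<noteq> 0" "v \<noteq> 0"
  shows "norm (1 / u - 1 / v) \<le> norm (u - v) * ((norm (1 / u))\<^sup>2 + (norm (1 / v))\<^sup>2)"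
proof -
  have "1 / u - 1 / v = (v - u) * (1 / u) * (1 / v)" using assms by (simp add: field_simps)
  then have "norm (1 / u - 1 / v) = norm (u - v) * (norm (1 / u) * norm (1 / v))"
    by (simp only: norm_mult mult.assoc norm_minus_commute)
  also have "\<dots> \<le> norm (u - v) * ((norm (1 / u))\<^sup>2 + (norm (1 / v))\<^sup>2)"
    using sum_squares_bound[of "norm (1 / u)" "norm (1 / v)"]
    by (intro mult_left_mono) (auto intro: order.trans[rotated])
  finally show ?thesis .
qed

lemma Im_inverse: "Im (1 / w) = - Im w * (norm (1 / w))\<^sup>2"
  by (simp add: Im_divide norm_divide power_divide cmod_power2)

lemma inverse_sq_le_arctan_diff:
  fixes b s :: real
  assumes "b > 0"
  shows "1 / (b\<^sup>2 + s\<^sup>2) \<le> (1 + pi\<^sup>2 / b\<^sup>2) / (pi * b) * (arctan ((s + pi) / b) - arctan ((s - pi) / b))"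
proof -
  have "\<exists>\<xi>>s - pi. \<xi> < s + pi \<and> arctan ((s + pi) / b) - arctan ((s - pi) / b)
      = ((s + pi) - (s - pi)) * (inverse (1 + (\<xi> / b)\<^sup>2) * (1 / b))"
    by (rule MVT2) (use assms in \<open>auto intro!: derivative_eq_intros\<close>)
  then obtain \<xi> where "s - pi < \<xi>" "\<xi> < s + pi"
    and arctan_diff: "arctan ((s + pi) / b) - arctan ((s - pi) / b)
      = 2 * pi * (inverse (1 + (\<xi> / b)\<^sup>2) * (1 / b))"
    by auto
  then have \<xi>: "\<bar>\<xi> - s\<bar> \<le> pi" by simp
  have "inverse (1 + (\<xi> / b)\<^sup>2) * (1 / b) = b / (b\<^sup>2 + \<xi>\<^sup>2)"
    using assms by (simp add: field_simps power2_eq_square)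
  note diff = arctan_diff[unfolded this]
  have "\<xi>\<^sup>2 \<le> 2 * s\<^sup>2 + 2 * pi\<^sup>2"
    using \<xi> sum_squares_bound[of "\<xi> - s" s] abs_le_square_iff[of "\<xi> - s" pi]
    by (auto simp: power2_eq_square algebra_simps)
  moreover have "2 * (1 + pi\<^sup>2 / b\<^sup>2) * (b\<^sup>2 + s\<^sup>2) = 2 * b\<^sup>2 + 2 * s\<^sup>2 + 2 * pi\<^sup>2 + 2 * pi\<^sup>2 * s\<^sup>2 / b\<^sup>2"
    using assms by (simp add: field_simps)
  moreover have "0 \<le> 2 * pi\<^sup>2 * s\<^sup>2 / b\<^sup>2" "0 \<le> b\<^sup>2" by simp_all
  ultimately have "b\<^sup>2 + \<xi>\<^sup>2 \<le> 2 * (1 + pi\<^sup>2 / b\<^sup>2) * (b\<^sup>2 + s\<^sup>2)"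
    by linarith
  then have "1 / (b\<^sup>2 + s\<^sup>2) \<le> 2 * (1 + pi\<^sup>2 / b\<^sup>2) / (b\<^sup>2 + \<xi>\<^sup>2)"
    using assms by (simp add: field_simps add_pos_nonneg)
  also have "\<dots> = (1 + pi\<^sup>2 / b\<^sup>2) / (pi * b) * (2 * pi * (b / (b\<^sup>2 + \<xi>\<^sup>2)))"
    using assms by simp
  finally show ?thesis unfolding diff .
qed

lemma sum_inverse_sq_shift_le:
  fixes b t :: real
  assumes "b > 0"
  shows "(\<Sum>k\<in>{- int N..<int N}. 1 / (b\<^sup>2 + (t + 2 * pi * of_int k)\<^sup>2)) \<le> (1 + pi\<^sup>2 / b\<^sup>2) / b"
proof -
  define K where "K = (1 + pi\<^sup>2 / b\<^sup>2) / (pi * b)"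
  define a where "a k = arctan ((t + 2 * pi * of_int k - pi) / b)" for k :: int
  have "1 / (b\<^sup>2 + (t + 2 * pi * of_int k)\<^sup>2) \<le> K * (a (k + 1) - a k)" for k
    using inverse_sq_le_arctan_diff[OF assms, of "t + 2 * pi * of_int k"]
    by (simp add: K_def a_def algebra_simps)
  then have "(\<Sum>k\<in>{- int N..<int N}. 1 / (b\<^sup>2 + (t + 2 * pi * of_int k)\<^sup>2))
      \<le> K * (\<Sum>k\<in>{- int N..<int N}. a (k + 1) - a k)"
    by (simp add: sum_mono sum_distrib_left)
  also have "\<dots> = K * (a (int N) - a (- int N))"
    by (simp add: sum_int_interval_telescope)
  also have "\<dots> \<le> K * pi"
    using arctan_bounded[of "(t + 2 * pi * of_int (int N) - pi) / b"]
      arctan_bounded[of "(t + 2 * pi * of_int (- int N) - pi) / b"] assms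
    by (intro mult_left_mono) (auto simp: K_def a_def)
  finally show ?thesis using assms by (simp add: K_def)
qed

lemma cot_partial_sum_lipschitz:
  assumes "b > 0" "Im u \<ge> b" "Im v \<ge> b"
  shows "norm (cot_partial_sum N u - cot_partial_sum N v) \<le> 2 * (1 + pi\<^sup>2 / b\<^sup>2) / b * norm (u - v)"
proof -
  define c where "c k = 2 * pi * of_int k" for k :: int
  define T where "T t = (\<Sum>k\<in>{- int N..<int N}. 1 / (b\<^sup>2 + (t + c k)\<^sup>2))" for t
  have shift: "(w::complex) + 2 * of_real pi * of_int k = w + of_real (c k)" for w k by (simp add: c_def)
  have "norm (cot_partial_sum N u - cot_partial_sum N v)
      \<le> (\<Sum>k\<in>{- int N..<int N}. norm (1 / (u + of_real (c k)) - 1 / (v + of_real (c k))))"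
    unfolding cot_partial_sum_def shift sum_subtractf[symmetric] by (rule norm_sum)
  also have "\<dots> \<le> (\<Sum>k\<in>{- int N..<int N}. norm (u - v) *
      (1 / (b\<^sup>2 + (Re u + c k)\<^sup>2) + 1 / (b\<^sup>2 + (Re v + c k)\<^sup>2)))"
  proof (rule sum_mono)
    fix k
    have "u + of_real (c k) \<noteq> 0" "v + of_real (c k) \<noteq> 0" "Im (u + of_real (c k)) \<ge> b" "Im (v + of_real (c k)) \<ge> b"
      using assms by (auto simp: complex_eq_iff)
    with assms(1) show "norm (1 / (u + of_real (c k)) - 1 / (v + of_real (c k)))
        \<le> norm (u - v) * (1 / (b\<^sup>2 + (Re u + c k)\<^sup>2) + 1 / (b\<^sup>2 + (Re v + c k)\<^sup>2))"
      using norm_inverse_diff_le[of "u + of_real (c k)" "v + of_real (c k)"]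
        norm_inverse_sq_le[of b "u + of_real (c k)"] norm_inverse_sq_le[of b "v + of_real (c k)"]
      by (fastforce intro: order.trans mult_left_mono add_mono)
  qed
  also have "\<dots> = norm (u - v) * (T (Re u) + T (Re v))"
    by (simp add: T_def sum_distrib_left sum.distrib distrib_left)
  also have "\<dots> \<le> norm (u - v) * ((1 + pi\<^sup>2 / b\<^sup>2) / b + (1 + pi\<^sup>2 / b\<^sup>2) / b)"
    using sum_inverse_sq_shift_le[OF assms(1), of "Re u" N] sum_inverse_sq_shift_le[OF assms(1), of "Re v" N]
    by (intro mult_left_mono add_mono) (auto simp: T_def c_def)
  finally show ?thesis by (simp add: mult.commute add_divide_distrib[symmetric])
qed

section \<open>Cauchy transforms of probability measures on the line\<close>

lemma measurable_real_prob_measure: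
  fixes f :: "real \<Rightarrow> 'b::topological_space"
  assumes "real_prob_measure \<mu>" "f \<in> borel_measurable borel"
  shows "f \<in> borel_measurable \<mu>"
proof -
  have "sets \<mu> = sets borel" using assms(1) by (simp add: real_prob_measure_def)
  then have "borel_measurable \<mu> = (borel_measurable borel :: (real \<Rightarrow> 'b) set)"
    by (rule measurable_cong_sets) simp
  with assms(2) show ?thesis by simp
qed

lemma integrable_real_prob_measure_bounded:
  fixes f :: "real \<Rightarrow> 'b::{banach, second_countable_topology}"
  assumes "real_prob_measure \<mu>" "f \<in> borel_measurable borel" "\<And>x. norm (f x) \<le> B"
  shows "integrable \<mu> f"
proof -
  interpret prob_space \<mu> using assms(1) by (simp add: real_prob_measure_def)
  show ?thesis
    using assms by (intro integrable_const_bound[of _ B]) (auto simp: measurable_real_prob_measure)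
qed

lemma integrable_cauchy_kernel:
  assumes "real_prob_measure \<mu>" "Im z > 0"
  shows "integrable \<mu> (\<lambda>x. 1 / (z - complex_of_real x))"
  using assms norm_inverse_le_Im[of "Im z"]
  by (intro integrable_real_prob_measure_bounded[where B = "1 / Im z"]) auto

lemma integrable_schwarz_kernel:
  assumes "real_prob_measure \<mu>" "Im z > 0"
  shows "integrable \<mu> (\<lambda>x. schwarz_kernel (z - complex_of_real x))"
proof (rule integrable_real_prob_measure_bounded[OF assms(1)])
  show "(\<lambda>x. schwarz_kernel (z - complex_of_real x)) \<in> borel_measurable borel"
    unfolding schwarz_kernel_def by measurable
  fix x
  have "norm (schwarz_kernel (z - complex_of_real x)) \<le> norm (schwarz_kernel (z - complex_of_real x) - 1) + 1"
    using norm_triangle_ineq[of "schwarz_kernel (z - complex_of_real x) - 1" 1] by simp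
  also have "\<dots> \<le> 2 * exp (- Im z) / (1 - exp (- Im z)) + 1"
    using assms(2) norm_schwarz_kernel_minus_one_le[of "Im z"] by simp
  finally show "norm (schwarz_kernel (z - complex_of_real x)) \<le> 2 * exp (- Im z) / (1 - exp (- Im z)) + 1" .
qed

lemma norm_integral_sq_le:
  fixes g :: "'a \<Rightarrow> complex"
  assumes "prob_space M" "integrable M g" "integrable M (\<lambda>x. (norm (g x))\<^sup>2)"
  shows "(norm (integral\<^sup>L M g))\<^sup>2 \<le> integral\<^sup>L M (\<lambda>x. (norm (g x))\<^sup>2)"
proof -
  interpret prob_space M by fact
  have sq_integrable: "integrable M (\<lambda>x. (h (g x))\<^sup>2)" if "h = Re \<or> h = Im" for h
    using that assms
    by (intro Bochner_Integration.integrable_bound[OF assms(3)])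
       (auto simp: cmod_power2)
  have "(expectation (\<lambda>x. h (g x)))\<^sup>2 \<le> expectation (\<lambda>x. (h (g x))\<^sup>2)" if "h = Re \<or> h = Im" for h
  proof -
    have "0 \<le> variance (\<lambda>x. h (g x))" by (rule variance_positive)
    also have "\<dots> = expectation (\<lambda>x. (h (g x))\<^sup>2) - (expectation (\<lambda>x. h (g x)))\<^sup>2"
      using that assms sq_integrable[OF that] by (intro variance_eq) auto
    finally show ?thesis by simp
  qed
  then have "(Re (integral\<^sup>L M g))\<^sup>2 + (Im (integral\<^sup>L M g))\<^sup>2
      \<le> expectation (\<lambda>x. (Re (g x))\<^sup>2) + expectation (\<lambda>x. (Im (g x))\<^sup>2)"
    using assms(2) by (intro add_mono) (simp_all flip: integral_Re integral_Im)
  then show ?thesis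
    using sq_integrable by (simp add: cmod_power2 flip: Bochner_Integration.integral_add)
qed

lemma Im_cauchy_F_ge:
  assumes "real_prob_measure \<mu>" "Im z > 0"
  shows "Im z \<le> Im (cauchy_F \<mu> z)"
proof -
  interpret prob_space \<mu> using assms(1) by (simp add: real_prob_measure_def)
  define g where "g x = 1 / (z - complex_of_real x)" for x
  define J where "J = expectation (\<lambda>x. (norm (g x))\<^sup>2)"
  have g_integrable: "integrable \<mu> g"
    unfolding g_def using assms by (rule integrable_cauchy_kernel)
  have "norm (g x) \<le> 1 / Im z" for x
    unfolding g_def using assms by (intro norm_inverse_le_Im) auto
  then have g_sq_integrable: "integrable \<mu> (\<lambda>x. (norm (g x))\<^sup>2)"
    using assms by (intro integrable_real_prob_measure_bounded[where B = "(1 / Im z)\<^sup>2"])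
      (auto simp: g_def intro!: power_mono)
  have "g x \<noteq> 0" for x
    using assms by (auto simp: g_def)
  then have "J \<noteq> 0"
    using g_sq_integrable by (auto simp: J_def integral_nonneg_eq_0_iff_AE)
  then have "J > 0"
    unfolding J_def by (metis integral_nonneg_AE AE_I2 zero_le_power2 order.not_eq_order_implies_strict)
  have G: "cauchy_G \<mu> z = expectation g"
    by (simp add: cauchy_G_def g_def[abs_def])
  have "Im (expectation g) = - Im z * J"
    using g_integrable by (simp add: J_def g_def Im_inverse flip: integral_Im)
  with \<open>J > 0\<close> assms(2) have "expectation g \<noteq> 0" by auto
  moreover have "(norm (expectation g))\<^sup>2 \<le> J"
    unfolding J_def using prob_space_axioms g_integrable g_sq_integrable by (rule norm_integral_sq_le)
  ultimately have "Im z \<le> Im z * J / (norm (expectation g))\<^sup>2"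
    using \<open>J > 0\<close> assms(2) by (simp add: field_simps)
  also have "\<dots> = Im (cauchy_F \<mu> z)"
    by (simp add: cauchy_F_def G Im_inverse \<open>Im (expectation g) = - Im z * J\<close> norm_divide power_divide)
  finally show ?thesis .
qed

lemma real_prob_measure_if_class_L: "\<mu> \<in> class_L \<Longrightarrow> real_prob_measure \<mu>"
  by (simp add: class_L_def)

lemma cauchy_F_add_period:
  assumes "\<mu> \<in> class_L" "Im z > 0"
  shows "cauchy_F \<mu> (z + 2 * of_real pi * of_int n) = cauchy_F \<mu> z + 2 * of_real pi * of_int n"
proof -
  have period: "cauchy_F \<mu> (w + 2 * of_real pi) = cauchy_F \<mu> w + 2 * of_real pi" if "Im w > 0" for w
    using assms(1) that by (simp add: class_L_def upper_half_plane_def)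
  show ?thesis
  proof (induction n rule: int_induct[where k = 0])
    case (step1 i)
    then show ?case
      using period[of "z + 2 * of_real pi * of_int i"] assms(2) by (simp add: algebra_simps)
  next
    case (step2 i)
    then show ?case
      using period[of "z + 2 * of_real pi * of_int (i - 1)"] assms(2) by (simp add: algebra_simps)
  qed simp
qed

lemma integral_cot_partial_sum:
  assumes "\<mu> \<in> class_L" "Im z > 0"
  shows "integrable \<mu> (\<lambda>x. cot_partial_sum N (z - complex_of_real x))"
    and "(LINT x|\<mu>. cot_partial_sum N (z - complex_of_real x)) = cot_partial_sum N (cauchy_F \<mu> z)"
proof -
  define p where "p k = z + 2 * of_real pi * of_int k" for k :: int
  have "Im (p k) > 0" for k using assms(2) by (simp add: p_def)
  then have integrable: "integrable \<mu> (\<lambda>x. 1 / (p k - complex_of_real x))" for k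
    by (rule integrable_cauchy_kernel[OF real_prob_measure_if_class_L[OF assms(1)]])
  have sum: "cot_partial_sum N (z - complex_of_real x)
      = (\<Sum>k\<in>{- int N..<int N}. 1 / (p k - complex_of_real x))" for x
    unfolding cot_partial_sum_def p_def by (simp add: algebra_simps)
  show "integrable \<mu> (\<lambda>x. cot_partial_sum N (z - complex_of_real x))"
    unfolding sum using integrable by auto
  have "(LINT x|\<mu>. cot_partial_sum N (z - complex_of_real x)) = (\<Sum>k\<in>{- int N..<int N}. cauchy_G \<mu> (p k))"
    unfolding sum cauchy_G_def using integrable by simp
  also have "\<dots> = cot_partial_sum N (cauchy_F \<mu> z)"
    unfolding cot_partial_sum_def
  proof (rule sum.cong[OF refl])
    fix k
    have "cauchy_G \<mu> (p k) = 1 / cauchy_F \<mu> (p k)" by (simp add: cauchy_F_def)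
    then show "cauchy_G \<mu> (p k) = 1 / (cauchy_F \<mu> z + 2 * of_real pi * of_int k)"
      using cauchy_F_add_period[OF assms, of k] by (simp add: p_def)
  qed
  finally show "(LINT x|\<mu>. cot_partial_sum N (z - complex_of_real x)) = cot_partial_sum N (cauchy_F \<mu> z)" .
qed

lemma integral_cot_partial_sum_diff_tendsto:
  assumes "real_prob_measure \<mu>" "Im z > 0" "Im z' > 0"
  shows "(\<lambda>N. LINT x|\<mu>. cot_partial_sum N (z - complex_of_real x) - cot_partial_sum N (z' - complex_of_real x))
    \<longlonglongrightarrow> (LINT x|\<mu>. - \<i> / 2 * (schwarz_kernel (z - complex_of_real x) - schwarz_kernel (z' - complex_of_real x)))"
proof -
  define b where "b = min (Im z) (Im z')"
  have b: "b > 0" "Im z \<ge> b" "Im z' \<ge> b" using assms by (auto simp: b_def)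
  define C where "C = 2 * (1 + pi\<^sup>2 / b\<^sup>2) / b * norm (z - z')"
  \<comment> \<open>The partial sums themselves are not dominated uniformly in \<open>x\<close>, but their differences are.\<close>
  show ?thesis
  proof (rule integral_dominated_convergence[where w = "\<lambda>_. C"])
    show "(\<lambda>x. - \<i> / 2 * (schwarz_kernel (z - complex_of_real x) - schwarz_kernel (z' - complex_of_real x)))
        \<in> borel_measurable \<mu>"
      "(\<lambda>x. cot_partial_sum N (z - complex_of_real x) - cot_partial_sum N (z' - complex_of_real x))
        \<in> borel_measurable \<mu>" for N
      unfolding schwarz_kernel_def cot_partial_sum_def
      by (intro measurable_real_prob_measure[OF assms(1)]; measurable)+
    show "integrable \<mu> (\<lambda>_. C)"
      using assms(1) by (simp add: real_prob_measure_def prob_space.finite_measure finite_measure.integrable_const)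
    show "AE x in \<mu>. (\<lambda>N. cot_partial_sum N (z - complex_of_real x) - cot_partial_sum N (z' - complex_of_real x))
        \<longlonglongrightarrow> - \<i> / 2 * (schwarz_kernel (z - complex_of_real x) - schwarz_kernel (z' - complex_of_real x))"
      using assms by (intro AE_I2 cot_partial_sum_diff_tendsto) auto
    show "AE x in \<mu>. norm (cot_partial_sum N (z - complex_of_real x) - cot_partial_sum N (z' - complex_of_real x)) \<le> C"
      for N
    proof (rule AE_I2)
      fix x
      show "norm (cot_partial_sum N (z - complex_of_real x) - cot_partial_sum N (z' - complex_of_real x)) \<le> C"
        using b cot_partial_sum_lipschitz[OF b(1), of "z - complex_of_real x" "z' - complex_of_real x" N]
        by (simp add: C_def)
    qed
  qed
qed

lemma integral_schwarz_kernel_diff: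
  assumes "\<mu> \<in> class_L" "Im z > 0" "Im z' > 0"
  shows "(LINT x|\<mu>. schwarz_kernel (z - complex_of_real x)) - (LINT x|\<mu>. schwarz_kernel (z' - complex_of_real x))
       = schwarz_kernel (cauchy_F \<mu> z) - schwarz_kernel (cauchy_F \<mu> z')"
proof -
  have \<mu>: "real_prob_measure \<mu>" using assms(1) by (rule real_prob_measure_if_class_L)
  have "Im (cauchy_F \<mu> z) > 0" "Im (cauchy_F \<mu> z') > 0"
    using Im_cauchy_F_ge[OF \<mu>] assms(2,3) by (meson less_le_trans)+
  then have "(\<lambda>N. cot_partial_sum N (cauchy_F \<mu> z) - cot_partial_sum N (cauchy_F \<mu> z'))
      \<longlonglongrightarrow> - \<i> / 2 * (schwarz_kernel (cauchy_F \<mu> z) - schwarz_kernel (cauchy_F \<mu> z'))"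
    by (intro cot_partial_sum_diff_tendsto) auto
  moreover have "(\<lambda>N. cot_partial_sum N (cauchy_F \<mu> z) - cot_partial_sum N (cauchy_F \<mu> z'))
      \<longlonglongrightarrow> - \<i> / 2 * ((LINT x|\<mu>. schwarz_kernel (z - complex_of_real x))
        - (LINT x|\<mu>. schwarz_kernel (z' - complex_of_real x)))"
    using integral_cot_partial_sum_diff_tendsto[OF \<mu> assms(2,3)]
      integral_cot_partial_sum[OF assms(1)] integrable_schwarz_kernel[OF \<mu>] assms(2,3)
    by simp
  ultimately show ?thesis
    using LIMSEQ_unique by fastforce
qed

lemma norm_integral_schwarz_kernel_minus_one_le:
  assumes "real_prob_measure \<mu>" "b > 0" "Im z \<ge> b"
  shows "norm ((LINT x|\<mu>. schwarz_kernel (z - complex_of_real x)) - 1) \<le> 2 * exp (- b) / (1 - exp (- b))"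
proof -
  interpret prob_space \<mu> using assms(1) by (simp add: real_prob_measure_def)
  have integrable: "integrable \<mu> (\<lambda>x. schwarz_kernel (z - complex_of_real x))"
    using assms by (intro integrable_schwarz_kernel) auto
  have "norm ((LINT x|\<mu>. schwarz_kernel (z - complex_of_real x)) - 1)
      = norm (LINT x|\<mu>. schwarz_kernel (z - complex_of_real x) - 1)"
    using integrable by (simp add: prob_space)
  also have "\<dots> \<le> (LINT x|\<mu>. norm (schwarz_kernel (z - complex_of_real x) - 1))"
    by (rule integral_norm_bound)
  also have "\<dots> \<le> (LINT x|\<mu>. 2 * exp (- b) / (1 - exp (- b)))"
    using assms integrable by (intro integral_mono norm_schwarz_kernel_minus_one_le) auto
  finally show ?thesis by (simp add: prob_space)
qed

lemma integral_schwarz_kernel: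
  assumes "\<mu> \<in> class_L" "Im z > 0"
  shows "(LINT x|\<mu>. schwarz_kernel (z - complex_of_real x)) = schwarz_kernel (cauchy_F \<mu> z)"
proof -
  have \<mu>: "real_prob_measure \<mu>" using assms(1) by (rule real_prob_measure_if_class_L)
  define z' where "z' n = \<i> * of_real (real n + 1)" for n :: nat
  define B where "B n = 2 * exp (- (real n + 1)) / (1 - exp (- (real n + 1)))" for n :: nat
  have Im_z': "Im (z' n) = real n + 1" for n by (simp add: z'_def)
  \<comment> \<open>Both sides tend to \<open>1\<close> as \<open>Im z \<rightarrow> \<infinity>\<close>; this fixes the constant left open by the difference formula.\<close>
  have "B \<longlonglongrightarrow> 0" unfolding B_def by real_asymp
  moreover have "norm ((LINT x|\<mu>. schwarz_kernel (z' n - complex_of_real x)) - 1) \<le> B n" for n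
    unfolding B_def using Im_z' by (intro norm_integral_schwarz_kernel_minus_one_le[OF \<mu>]) auto
  ultimately have "(\<lambda>n. LINT x|\<mu>. schwarz_kernel (z' n - complex_of_real x)) \<longlonglongrightarrow> 1"
    by (rule LIMSEQ_norm_diff_bound)
  moreover have "norm (schwarz_kernel (cauchy_F \<mu> (z' n)) - 1) \<le> B n" for n
    unfolding B_def using Im_cauchy_F_ge[OF \<mu>, of "z' n"] Im_z'
    by (intro norm_schwarz_kernel_minus_one_le) auto
  with \<open>B \<longlonglongrightarrow> 0\<close> have "(\<lambda>n. schwarz_kernel (cauchy_F \<mu> (z' n))) \<longlonglongrightarrow> 1"
    by (rule LIMSEQ_norm_diff_bound)
  ultimately have "(\<lambda>n. schwarz_kernel (cauchy_F \<mu> z) - schwarz_kernel (cauchy_F \<mu> (z' n))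
      + (LINT x|\<mu>. schwarz_kernel (z' n - complex_of_real x))) \<longlonglongrightarrow> schwarz_kernel (cauchy_F \<mu> z) - 1 + 1"
    by (intro tendsto_intros)
  moreover have "schwarz_kernel (cauchy_F \<mu> z) - schwarz_kernel (cauchy_F \<mu> (z' n))
      + (LINT x|\<mu>. schwarz_kernel (z' n - complex_of_real x)) = (LINT x|\<mu>. schwarz_kernel (z - complex_of_real x))" for n
    using integral_schwarz_kernel_diff[OF assms, of "z' n"] Im_z' by (simp add: algebra_simps)
  ultimately show ?thesis by (simp add: LIMSEQ_const_iff)
qed

section \<open>The wrapped measure\<close>

lemma psi_circ_wrap_W_exp:
  assumes "\<mu> \<in> class_L" "Im z > 0"
  shows "psi_circ (wrap_W \<mu>) (exp (\<i> * z)) = (schwarz_kernel (cauchy_F \<mu> z) - 1) / 2"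
proof -
  have \<mu>: "real_prob_measure \<mu>" using assms(1) by (rule real_prob_measure_if_class_L)
  interpret prob_space \<mu> using \<mu> by (simp add: real_prob_measure_def)
  define w where "w = exp (\<i> * z)"
  have integrand: "w * exp (- \<i> * complex_of_real x) / (1 - w * exp (- \<i> * complex_of_real x))
      = (schwarz_kernel (z - complex_of_real x) - 1) / 2" for x
  proof -
    define e where "e = exp (\<i> * (z - complex_of_real x))"
    have "w * exp (- \<i> * complex_of_real x) = e"
      by (simp add: w_def e_def algebra_simps flip: exp_add)
    moreover have "norm e < 1" using assms(2) by (simp add: e_def norm_exp_eq_Re)
    then have "1 - e \<noteq> 0" by auto
    ultimately show ?thesis
      unfolding schwarz_kernel_def e_def[symmetric] by (simp add: field_simps)
  qed
  have "psi_circ (wrap_W \<mu>) w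
      = (LINT x|\<mu>. w * exp (- \<i> * complex_of_real x) / (1 - w * exp (- \<i> * complex_of_real x)))"
    unfolding psi_circ_def wrap_W_def
    by (rule integral_distr) (simp_all add: measurable_real_prob_measure[OF \<mu>])
  also have "\<dots> = (LINT x|\<mu>. (schwarz_kernel (z - complex_of_real x) - 1) / 2)"
    by (simp only: integrand)
  also have "\<dots> = ((LINT x|\<mu>. schwarz_kernel (z - complex_of_real x)) - 1) / 2"
    using integrable_schwarz_kernel[OF \<mu> assms(2)] by (simp add: prob_space)
  finally show ?thesis by (simp add: w_def integral_schwarz_kernel[OF assms])
qed

lemma eta_circ_wrap_W_exp:
  assumes "\<mu> \<in> class_L" "Im z > 0"
  shows "eta_circ (wrap_W \<mu>) (exp (\<i> * z)) = exp (\<i> * cauchy_F \<mu> z)"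
proof -
  define q where "q = exp (\<i> * cauchy_F \<mu> z)"
  have "norm q < 1"
    using Im_cauchy_F_ge[OF real_prob_measure_if_class_L[OF assms(1)] assms(2)] assms(2)
    by (simp add: q_def norm_exp_eq_Re)
  then have "1 - q \<noteq> 0" by auto
  then have "psi_circ (wrap_W \<mu>) (exp (\<i> * z)) = q / (1 - q)"
    unfolding psi_circ_wrap_W_exp[OF assms] schwarz_kernel_def q_def[symmetric] by (simp add: field_simps)
  moreover have "q / (1 - q) / (1 + q / (1 - q)) = q"
    using \<open>1 - q \<noteq> 0\<close> by (simp add: field_simps)
  ultimately show ?thesis by (simp add: eta_circ_def q_def)
qed

lemma exp_i_eq_iff: "exp (\<i> * u) = exp (\<i> * v) \<longleftrightarrow> (\<exists>n::int. u = v + 2 * of_real pi * of_int n)"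
proof -
  have "\<i> * u = \<i> * v + of_int (2 * n) * pi * \<i> \<longleftrightarrow> \<i> * u = \<i> * (v + 2 * of_real pi * of_int n)"
    for n :: int by (simp add: algebra_simps)
  then show ?thesis by (simp add: exp_eq)
qed

lemma exp_i_onto_punctured_disc:
  assumes "w \<in> ball 0 1" "w \<noteq> 0"
  shows "\<exists>z. Im z > 0 \<and> exp (\<i> * z) = w"
proof (intro exI conjI)
  show "exp (\<i> * (- \<i> * Ln w)) = w" using assms by simp
  show "Im (- \<i> * Ln w) > 0" using assms by (simp add: Re_Ln)
qed

lemma inj_on_upper_half_plane_iff_inj_on_disc:
  fixes F E :: "complex \<Rightarrow> complex"
  assumes period: "\<And>z n. Im z > 0 \<Longrightarrow> F (z + 2 * of_real pi * of_int n) = F z + 2 * of_real pi * of_int n"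
    and conj: "\<And>z. Im z > 0 \<Longrightarrow> E (exp (\<i> * z)) = exp (\<i> * F z)"
    and "E 0 = 0"
  shows "inj_on F upper_half_plane \<longleftrightarrow> inj_on E (ball 0 1)"
proof -
  have into: "exp (\<i> * z) \<in> ball 0 1" if "Im z > 0" for z
    using that by (simp add: norm_exp_eq_Re)
  show ?thesis
  proof
    assume inj: "inj_on F upper_half_plane"
    have E_nonzero: "E w \<noteq> 0" if "w \<in> ball 0 1" "w \<noteq> 0" for w
      using exp_i_onto_punctured_disc[OF that] conj by force
    show "inj_on E (ball 0 1)"
    proof (rule inj_onI)
      fix w w' assume w: "w \<in> ball 0 1" "w' \<in> ball 0 1" and "E w = E w'"
      show "w = w'"
      proof (cases "w = 0 \<or> w' = 0")
        case True
        with w \<open>E w = E w'\<close> \<open>E 0 = 0\<close> E_nonzero show ?thesis by metis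
      next
        case False
        with w exp_i_onto_punctured_disc obtain z z' where z: "Im z > 0" "exp (\<i> * z) = w"
          and z': "Im z' > 0" "exp (\<i> * z') = w'" by meson
        have "exp (\<i> * F z) = exp (\<i> * F z')"
          using \<open>E w = E w'\<close> conj[OF z(1)] conj[OF z'(1)] z(2) z'(2) by simp
        then obtain n :: int where "F z = F z' + 2 * of_real pi * of_int n"
          using exp_i_eq_iff by blast
        also have "\<dots> = F (z' + 2 * of_real pi * of_int n)" using period z' by simp
        finally have "z = z' + 2 * of_real pi * of_int n"
          using inj z z' by (auto simp: inj_on_def upper_half_plane_def)
        with z z' show ?thesis using exp_i_eq_iff by blast
      qed
    qed
  next
    assume inj: "inj_on E (ball 0 1)"
    show "inj_on F upper_half_plane"
    proof (rule inj_onI)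
      fix z z' assume "z \<in> upper_half_plane" "z' \<in> upper_half_plane" "F z = F z'"
      then have "Im z > 0" "Im z' > 0" by (auto simp: upper_half_plane_def)
      with \<open>F z = F z'\<close> have "E (exp (\<i> * z)) = E (exp (\<i> * z'))" by (simp add: conj)
      with \<open>Im z > 0\<close> \<open>Im z' > 0\<close> have "exp (\<i> * z) = exp (\<i> * z')"
        using inj_onD[OF inj _ into into] by blast
      then obtain n :: int where n: "z = z' + 2 * of_real pi * of_int n"
        using exp_i_eq_iff by blast
      with \<open>F z = F z'\<close> have "n = 0" using period[OF \<open>Im z' > 0\<close>, of n] by simp
      with n show "z = z'" by simp
    qed
  qed
qed

theorem lemma4p18:
  assumes "\<mu> \<in> class_L"
  shows "inj_on (cauchy_F \<mu>) upper_half_plane \<longleftrightarrow> inj_on (eta_circ (wrap_W \<mu>)) (ball 0 1)"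
proof (rule inj_on_upper_half_plane_iff_inj_on_disc)
  show "cauchy_F \<mu> (z + 2 * of_real pi * of_int n) = cauchy_F \<mu> z + 2 * of_real pi * of_int n"
    if "Im z > 0" for z n
    using assms that by (rule cauchy_F_add_period)
  show "eta_circ (wrap_W \<mu>) (exp (\<i> * z)) = exp (\<i> * cauchy_F \<mu> z)" if "Im z > 0" for z
    using assms that by (rule eta_circ_wrap_W_exp)
  show "eta_circ (wrap_W \<mu>) 0 = 0"
    by (simp add: eta_circ_def psi_circ_def)
qed

end
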